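(* Let $d\ge1$, $N\ge1$, let $a:\mathbb{Z}^d\to\mathbb{R}$ define a symmetric, spatially homogeneous, irreducible random walk satisfying condition (F) or condition (HT), let $x_1,\dots,x_N\in\mathbb{Z}^d$ be distinct branching sources, and let $\mathscr{H}_\beta=\mathscr{A}+\beta\sum_{i=1}^N\delta_{x_i}\delta_{x_i}^T$. Then the branching random walk is weakly supercritical as $\beta\downarrow\beta_c$: there exists $\varepsilon_0>0$ such that for every $\beta\in(\beta_c,\beta_c+\varepsilon_0)$ the operator $\mathscr{H}_\beta$ has a simple positive eigenvalue $\lambda(\beta)$, and $\lambda(\beta)\to0$ as $\beta\downarrow\beta_c$.
   Context: $a$ satisfies $a(0)<0$, $a(z)\ge0$ for $z\ne0$, $a(z)=a(-z)$, $\sum_z a(z)=0$, and irreducibility (every $z\in\mathbb{Z}^d$ is a finite sum of vectors $z_i$ with $a(z_i)\ne0$). $(\mathscr{A}u)(x)=\sum_{x'}a(x-x')u(x')$ on $l^2(\mathbb{Z}^d)$; $\delta_x$ is the indicator vector of $x$; $\mathscr{H}_\beta$ is the evolutionary operator of the mean number of particles of a branching random walk with sources of intensity $\beta$ at $x_1,\dots,x_N$. Condition (F): $\sum_z|z|^2a(z)<\infty$. Condition (HT): $a(z)\sim H(z/|z|)|z|^{-(d+\alpha)}$ as $|z|\to\infty$ for some $\alpha\in(0,2)$ and some continuous positive symmetric function $H$ on $\mathbb{S}^{d-1}$. $\beta_c$ is the minimal value of $\beta$ such that the spectrum of $\mathscr{H}_\beta$ contains positive eigenvalues for all $\beta>\beta_c$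 sufficiently close to $\beta_c$ (the walk is called supercritical for such $\beta$). *)

theory Defs
  imports "HOL-Analysis.Analysis" "HOL-Library.Landau_Symbols"
begin

text \<open>Lattice points of Z^d are vectors of type int^'d; the dimension d is CARD('d).\<close>

definition zvec :: "int ^ 'd \<Rightarrow> real ^ 'd" where
  "zvec z = (\<chi> i. real_of_int (z $ i))"

definition walk_kernel :: "(int ^ 'd \<Rightarrow> real) \<Rightarrow> bool" where
  "walk_kernel a \<longleftrightarrow>
     a 0 < 0 \<and> (\<forall>z. z \<noteq> 0 \<longrightarrow> a z \<ge> 0) \<and> (\<forall>z. a z = a (- z)) \<and>
     (a has_sum 0) UNIV \<and>
     (\<forall>z. \<exists>zs. (\<forall>w\<in>set zs. a w \<noteq> 0) \<and> sum_list zs = z)"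

definition condF :: "(int ^ 'd \<Rightarrow> real) \<Rightarrow> bool" where
  "condF a \<longleftrightarrow> (\<lambda>z. (norm (zvec z))\<^sup>2 * a z) summable_on UNIV"

definition condHT :: "(int ^ 'd \<Rightarrow> real) \<Rightarrow> bool" where
  "condHT a \<longleftrightarrow> (\<exists>\<alpha>::real. 0 < \<alpha> \<and> \<alpha> < 2 \<and>
     (\<exists>H :: real ^ 'd \<Rightarrow> real. continuous_on (sphere 0 1) H \<and>
        (\<forall>s\<in>sphere 0 1. H s > 0 \<and> H (- s) = H s) \<and>
        (a \<sim>[cofinite] (\<lambda>z. H (sgn (zvec z)) * norm (zvec z) powr (- (real CARD('d) + \<alpha>))))))"

definition l2 :: "(int ^ 'd \<Rightarrow> real) set" where
  "l2 = {u. (\<lambda>x. (u x)\<^sup>2) summable_on UNIV}"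

definition opA :: "(int ^ 'd \<Rightarrow> real) \<Rightarrow> (int ^ 'd \<Rightarrow> real) \<Rightarrow> int ^ 'd \<Rightarrow> real" where
  "opA a u x = (\<Sum>\<^sub>\<infinity>x'. a (x - x') * u x')"

definition opH :: "(int ^ 'd \<Rightarrow> real) \<Rightarrow> (int ^ 'd) list \<Rightarrow> real \<Rightarrow> (int ^ 'd \<Rightarrow> real) \<Rightarrow> int ^ 'd \<Rightarrow> real" where
  "opH a xs \<beta> u x = opA a u x + \<beta> * (\<Sum>xi\<leftarrow>xs. (if x = xi then u xi else 0))"

definition eigenspace_H :: "(int ^ 'd \<Rightarrow> real) \<Rightarrow> (int ^ 'd) list \<Rightarrow> real \<Rightarrow> real \<Rightarrow> (int ^ 'd \<Rightarrow> real) set" where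
  "eigenspace_H a xs \<beta> mu = {u \<in> l2. opH a xs \<beta> u = (\<lambda>x. mu * u x)}"

definition is_eigenvalue :: "(int ^ 'd \<Rightarrow> real) \<Rightarrow> (int ^ 'd) list \<Rightarrow> real \<Rightarrow> real \<Rightarrow> bool" where
  "is_eigenvalue a xs \<beta> mu \<longleftrightarrow> (\<exists>u \<in> eigenspace_H a xs \<beta> mu. u \<noteq> (\<lambda>_. 0))"

text \<open>Simple eigenvalue: one-dimensional eigenspace (H_beta is bounded self-adjoint,
  so geometric and algebraic multiplicities agree).\<close>
definition is_simple_eigenvalue :: "(int ^ 'd \<Rightarrow> real) \<Rightarrow> (int ^ 'd) list \<Rightarrow> real \<Rightarrow> real \<Rightarrow> bool" where
  "is_simple_eigenvalue a xs \<beta> mu \<longleftrightarrow>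
     (\<exists>u \<in> eigenspace_H a xs \<beta> mu. u \<noteq> (\<lambda>_. 0) \<and>
        (\<forall>v \<in> eigenspace_H a xs \<beta> mu. \<exists>c::real. v = (\<lambda>x. c * u x)))"

definition has_pos_eigenvalue :: "(int ^ 'd \<Rightarrow> real) \<Rightarrow> (int ^ 'd) list \<Rightarrow> real \<Rightarrow> bool" where
  "has_pos_eigenvalue a xs \<beta> \<longleftrightarrow> (\<exists>mu>0. is_eigenvalue a xs \<beta> mu)"

definition beta_c :: "(int ^ 'd \<Rightarrow> real) \<Rightarrow> (int ^ 'd) list \<Rightarrow> real" where
  "beta_c a xs = Inf {b. \<exists>\<epsilon>>0. \<forall>\<beta>. b < \<beta> \<and> \<beta> < b + \<epsilon> \<longrightarrow> has_pos_eigenvalue a xs \<beta>}"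

end

theory Submission
  imports Defs
begin

text \<open>For \<open>\<mu> > 0\<close> the Green function \<open>G\<^sub>\<mu> = (\<mu> - \<A>)\<^sup>-\<^sup>1 \<delta>\<^sub>0\<close> is positive, symmetric, of total
  mass \<open>1/\<mu>\<close> and strictly decreasing in \<open>\<mu>\<close>. By the maximum principle for \<open>\<mu> - \<A>\<close>, an \<open>l\<^sup>2\<close>
  eigenfunction of \<open>\<H>\<^sub>\<beta>\<close> with eigenvalue \<open>\<mu> > 0\<close> equals \<open>\<beta> \<Sum>\<^sub>i u(x\<^sub>i) G\<^sub>\<mu>(\<cdot> - x\<^sub>i)\<close>, so \<open>\<mu>\<close> is
  such an eigenvalue iff \<open>1/\<beta>\<close> is an eigenvalue of the positive symmetric matrix
  \<open>\<Gamma>(\<mu>) = (G\<^sub>\<mu>(x\<^sub>i - x\<^sub>j))\<^sub>i\<^sub>j\<close>. Its Perron root \<open>\<gamma>(\<mu>)\<close> is simple, continuous, strictly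
  decreasing and at most \<open>N/\<mu>\<close>. Hence \<open>\<H>\<^sub>\<beta>\<close> has a positive eigenvalue iff \<open>1/\<beta> < sup \<gamma>\<close>, i.e.
  \<open>\<beta> > \<beta>\<^sub>c = 1 / sup \<gamma>\<close>, and then the root \<open>\<lambda>(\<beta>)\<close> of \<open>\<gamma>(\<lambda>) = 1/\<beta>\<close> is a simple eigenvalue, which
  tends to \<open>0\<close> as \<open>\<beta> \<down> \<beta>\<^sub>c\<close> because \<open>\<gamma>\<close> is strictly decreasing.\<close>

section \<open>Perron roots of positive symmetric kernels on a finite set\<close>

definition quad_form :: "'a set \<Rightarrow> ('a \<Rightarrow> 'a \<Rightarrow> real) \<Rightarrow> ('a \<Rightarrow> real) \<Rightarrow> real" where
  "quad_form X K u = (\<Sum>x\<in>X. \<Sum>y\<in>X. u x * K x y * u y)"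

definition sqnorm :: "'a set \<Rightarrow> ('a \<Rightarrow> real) \<Rightarrow> real" where
  "sqnorm X u = (\<Sum>x\<in>X. (u x)\<^sup>2)"

definition mat_app :: "'a set \<Rightarrow> ('a \<Rightarrow> 'a \<Rightarrow> real) \<Rightarrow> ('a \<Rightarrow> real) \<Rightarrow> 'a \<Rightarrow> real" where
  "mat_app X K u x = (\<Sum>y\<in>X. K x y * u y)"

lemma quad_form_eq_sum_mat_app: "quad_form X K u = (\<Sum>x\<in>X. u x * mat_app X K u x)"
  unfolding quad_form_def mat_app_def by (simp add: sum_distrib_left mult.assoc)

lemma quad_form_scale: "quad_form X K (\<lambda>x. t * u x) = t\<^sup>2 * quad_form X K u"
  unfolding quad_form_def by (simp add: sum_distrib_left power2_eq_square mult_ac)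

lemma sqnorm_scale: "sqnorm X (\<lambda>x. t * u x) = t\<^sup>2 * sqnorm X u"
  unfolding sqnorm_def by (simp add: sum_distrib_left power_mult_distrib)

lemma sqnorm_pos_iff:
  assumes "finite X"
  shows "0 < sqnorm X u \<longleftrightarrow> (\<exists>x\<in>X. u x \<noteq> 0)"
  using assms unfolding sqnorm_def
  by (simp add: less_le sum_nonneg sum_nonneg_eq_0_iff)

lemma quad_form_eigenvector:
  "(\<forall>x\<in>X. mat_app X K u x = g * u x) \<Longrightarrow> quad_form X K u = g * sqnorm X u"
  unfolding quad_form_eq_sum_mat_app sqnorm_def
  by (simp add: sum_distrib_left power2_eq_square mult_ac)

lemma mat_app_symmetric:
  assumes "\<forall>x\<in>X. \<forall>y\<in>X. K x y = K y x"
  shows "(\<Sum>x\<in>X. u x * mat_app X K v x) = (\<Sum>x\<in>X. v x * mat_app X K u x)"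
proof -
  have "(\<Sum>x\<in>X. u x * mat_app X K v x) = (\<Sum>x\<in>X. \<Sum>y\<in>X. u x * K x y * v y)"
    unfolding mat_app_def by (simp add: sum_distrib_left mult.assoc)
  also have "\<dots> = (\<Sum>y\<in>X. \<Sum>x\<in>X. u x * K x y * v y)" by (rule sum.swap)
  also have "\<dots> = (\<Sum>y\<in>X. v y * mat_app X K u y)"
    unfolding mat_app_def sum_distrib_left using assms by (intro sum.cong refl) (auto simp: mult_ac)
  finally show ?thesis .
qed

lemma compact_functions_supported_in_cube:
  "compact {u::'a \<Rightarrow> real. \<forall>x. u x \<in> (if x \<in> X then {-1..1} else {0})}"
proof -
  have "compactin (product_topology (\<lambda>_. euclidean) UNIV)
          (PiE UNIV (\<lambda>x. if x \<in> X then {-1..1::real} else {0}))"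
    by (subst compactin_PiE) auto
  moreover have "PiE UNIV (\<lambda>x. if x \<in> X then {-1..1::real} else {0}) =
      {u. \<forall>x. u x \<in> (if x \<in> X then {-1..1} else {0})}"
    by (auto simp: PiE_def Pi_def extensional_def)
  ultimately show ?thesis by (simp add: euclidean_product_topology)
qed

lemma quad_form_le_of_normalised_bound:
  assumes fin: "finite X"
    and unit: "\<And>w. \<forall>x. w x \<in> (if x \<in> X then {-1..1} else {0}) \<Longrightarrow> sqnorm X w = 1 \<Longrightarrow>
      quad_form X K w \<le> g"
  shows "quad_form X K w \<le> g * sqnorm X w"
proof (cases "\<exists>x\<in>X. w x \<noteq> 0")
  case False
  then show ?thesis by (simp add: quad_form_def sqnorm_def)
next
  case True
  have w_pos: "0 < sqnorm X w" using True sqnorm_pos_iff[OF fin] by blast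
  define s where "s = sqrt (sqnorm X w)"
  have s: "s > 0" "s\<^sup>2 = sqnorm X w" using w_pos by (auto simp: s_def)
  define w' where "w' x = (if x \<in> X then w x / s else 0)" for x
  have "\<bar>w x\<bar> \<le> s" if "x \<in> X" for x
  proof -
    have "(w x)\<^sup>2 \<le> s\<^sup>2"
      unfolding s(2) sqnorm_def using fin that by (intro member_le_sum) auto
    then show ?thesis using s(1) by (metis abs_le_square_iff abs_of_pos)
  qed
  then have "w' x \<in> {-1..1}" if "x \<in> X" for x
    using that s(1) by (force simp: w'_def abs_le_iff divide_le_eq le_divide_eq)
  moreover have "sqnorm X w' = (1 / s)\<^sup>2 * s\<^sup>2"
    using sqnorm_scale[of X "1 / s" w] by (simp add: sqnorm_def w'_def s(2))
  ultimately have "quad_form X K w' \<le> g" using s(1) by (intro unit) (auto simp: w'_def power_divide)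
  moreover have "quad_form X K w' = (1 / s)\<^sup>2 * quad_form X K w"
    using quad_form_scale[of X K "1 / s" w] by (simp add: quad_form_def w'_def)
  ultimately show ?thesis using s w_pos by (simp add: field_simps)
qed

lemma rayleigh_quotient_max_attained:
  fixes K :: "'a \<Rightarrow> 'a \<Rightarrow> real"
  assumes fin: "finite X" and ne: "X \<noteq> {}"
  obtains g u where "\<And>w. quad_form X K w \<le> g * sqnorm X w" "sqnorm X u = 1" "quad_form X K u = g"
proof -
  define S where "S = {u::'a \<Rightarrow> real. \<forall>x. u x \<in> (if x \<in> X then {-1..1} else {0})} \<inter> sqnorm X -` {1}"
  have cont_sqnorm: "continuous_on UNIV (sqnorm X :: ('a \<Rightarrow> real) \<Rightarrow> real)"
    unfolding sqnorm_def
    by (intro continuous_intros continuous_on_compose2[OF continuous_on_product_coordinates]) auto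
  have cont_quad: "continuous_on UNIV (quad_form X K)"
    unfolding quad_form_def
    by (intro continuous_intros continuous_on_compose2[OF continuous_on_product_coordinates]) auto
  have "compact S" unfolding S_def
    by (rule compact_Int_closed[OF compact_functions_supported_in_cube
          closed_vimage[OF closed_singleton cont_sqnorm]])
  obtain x1 where x1: "x1 \<in> X" using ne by auto
  have "sqnorm X (\<lambda>x. if x = x1 then 1 else 0) = 1"
    unfolding sqnorm_def using fin x1 by (simp add: if_distrib[of "\<lambda>t. t\<^sup>2"] cong: if_cong)
  then have "(\<lambda>x. if x = x1 then 1 else 0) \<in> S" using x1 by (auto simp: S_def)
  then obtain u where u: "u \<in> S" and umax: "\<And>w. w \<in> S \<Longrightarrow> quad_form X K w \<le> quad_form X K u"
    using continuous_attains_sup[OF \<open>compact S\<close> _ continuous_on_subset[OF cont_quad]] by blast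
  have "quad_form X K w \<le> quad_form X K u * sqnorm X w" for w
    using umax by (intro quad_form_le_of_normalised_bound[OF fin]) (simp add: S_def)
  moreover have "sqnorm X u = 1" using u by (simp add: S_def)
  ultimately show ?thesis using that by blast
qed

lemma quad_form_perturbation:
  assumes sym: "\<forall>x\<in>X. \<forall>y\<in>X. K x y = K y x"
  shows "quad_form X K (\<lambda>x. u x + t * r x) - g * sqnorm X (\<lambda>x. u x + t * r x) =
    (quad_form X K u - g * sqnorm X u) + 2 * t * (\<Sum>x\<in>X. r x * (mat_app X K u x - g * u x))
      + t\<^sup>2 * (quad_form X K r - g * sqnorm X r)"
proof -
  have lin: "mat_app X K (\<lambda>x. u x + t * r x) x = mat_app X K u x + t * mat_app X K r x" for x
    unfolding mat_app_def by (simp add: algebra_simps sum.distrib sum_distrib_left)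
  have "quad_form X K (\<lambda>x. u x + t * r x) = quad_form X K u
      + t * ((\<Sum>x\<in>X. u x * mat_app X K r x) + (\<Sum>x\<in>X. r x * mat_app X K u x)) + t\<^sup>2 * quad_form X K r"
    unfolding quad_form_eq_sum_mat_app lin
    by (simp add: algebra_simps sum.distrib sum_distrib_left power2_eq_square)
  also have "\<dots> = quad_form X K u + 2 * t * (\<Sum>x\<in>X. r x * mat_app X K u x) + t\<^sup>2 * quad_form X K r"
    using mat_app_symmetric[OF sym, of u r] by simp
  finally show ?thesis
    unfolding sqnorm_def
    by (simp add: algebra_simps sum.distrib sum_distrib_left sum_subtractf power2_eq_square)
qed

lemma rayleigh_maximiser_is_eigenvector:
  assumes fin: "finite X" and sym: "\<forall>x\<in>X. \<forall>y\<in>X. K x y = K y x"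
    and bound: "\<And>w. quad_form X K w \<le> g * sqnorm X w" and eq: "quad_form X K u = g * sqnorm X u"
  shows "\<forall>x\<in>X. mat_app X K u x = g * u x"
proof -
  define r where "r x = mat_app X K u x - g * u x" for x
  define R where "R = (\<Sum>x\<in>X. (r x)\<^sup>2)"
  define D where "D = quad_form X K r - g * sqnorm X r"
  have D: "D \<le> 0" using bound[of r] by (simp add: D_def)
  have descent: "2 * t * R + t\<^sup>2 * D \<le> 0" for t
    using quad_form_perturbation[OF sym, of u t r g] bound[of "\<lambda>x. u x + t * r x"] eq
    by (simp add: R_def D_def r_def power2_eq_square)
  have "R = 0"
  proof (rule ccontr)
    assume "R \<noteq> 0"
    then have R: "R > 0" using sum_nonneg[of X "\<lambda>x. (r x)\<^sup>2"] by (simp add: R_def)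
    define t where "t = R / (\<bar>D\<bar> + 1)"
    have t: "t > 0" "t * \<bar>D\<bar> < R" using R by (auto simp: t_def field_simps)
    have "t\<^sup>2 * D \<ge> - (t * (t * \<bar>D\<bar>))" using D by (simp add: power2_eq_square)
    moreover have "t * (t * \<bar>D\<bar>) < t * R" using t by simp
    moreover have "0 < t * R" using t R by simp
    ultimately have "0 < 2 * t * R + t\<^sup>2 * D" by (simp add: mult.assoc)
    then show False using descent[of t] by simp
  qed
  then show ?thesis using fin by (simp add: R_def sum_nonneg_eq_0_iff r_def)
qed

lemma quad_form_le_abs:
  assumes "\<forall>x\<in>X. \<forall>y\<in>X. K x y > 0"
  shows "quad_form X K u \<le> quad_form X K (\<lambda>x. \<bar>u x\<bar>)"
  unfolding quad_form_def
proof (intro sum_mono)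
  fix x y assume "x \<in> X" "y \<in> X"
  then have "K x y > 0" using assms by auto
  then show "u x * K x y * u y \<le> \<bar>u x\<bar> * K x y * \<bar>u y\<bar>"
    by (metis abs_ge_self abs_mult abs_of_pos)
qed

text \<open>For a positive kernel, the modulus of a maximiser of the Rayleigh quotient is again a
  maximiser, hence an eigenvector; positivity of the kernel then forces it to vanish nowhere.\<close>
lemma positive_kernel_rayleigh_maximiser:
  assumes fin: "finite X" and sym: "\<forall>x\<in>X. \<forall>y\<in>X. K x y = K y x"
    and pos: "\<forall>x\<in>X. \<forall>y\<in>X. K x y > 0"
    and bound: "\<And>w. quad_form X K w \<le> g * sqnorm X w" and eq: "quad_form X K u = g * sqnorm X u"
    and nz: "\<exists>x\<in>X. u x \<noteq> 0"
  shows "g > 0" "\<forall>x\<in>X. u x \<noteq> 0" "\<forall>x\<in>X. mat_app X K (\<lambda>x. \<bar>u x\<bar>) x = g * \<bar>u x\<bar>"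
proof -
  define v where "v x = \<bar>u x\<bar>" for x
  have "quad_form X K v = g * sqnorm X v"
    using quad_form_le_abs[OF pos, of u] bound[of v] eq unfolding v_def[abs_def] sqnorm_def by simp
  then have ev: "\<forall>x\<in>X. mat_app X K v x = g * v x" by (rule rayleigh_maximiser_is_eigenvector[OF fin sym bound])
  then show "\<forall>x\<in>X. mat_app X K (\<lambda>x. \<bar>u x\<bar>) x = g * \<bar>u x\<bar>" by (simp add: v_def[abs_def])
  obtain y where y: "y \<in> X" "u y \<noteq> 0" using nz by blast
  have gv: "g * v x > 0" if x: "x \<in> X" for x
  proof -
    have "0 < K x y * v y" using pos x y by (simp add: v_def)
    also have "\<dots> \<le> mat_app X K v x" unfolding mat_app_def
      using fin y pos x by (intro member_le_sum) (auto simp: v_def less_imp_le)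
    finally show ?thesis using ev x by simp
  qed
  show "g > 0" using gv[OF y(1)] by (simp add: v_def zero_less_mult_iff)
  show "\<forall>x\<in>X. u x \<noteq> 0" using gv by (fastforce simp: v_def)
qed

definition perron_eigenpair :: "'a set \<Rightarrow> ('a \<Rightarrow> 'a \<Rightarrow> real) \<Rightarrow> real \<Rightarrow> ('a \<Rightarrow> real) \<Rightarrow> bool" where
  "perron_eigenpair X K g v \<longleftrightarrow> g > 0 \<and> (\<forall>x\<in>X. v x > 0) \<and> (\<forall>x\<in>X. mat_app X K v x = g * v x) \<and>
     (\<forall>w. quad_form X K w \<le> g * sqnorm X w) \<and>
     (\<forall>w. (\<forall>x\<in>X. mat_app X K w x = g * w x) \<longrightarrow> (\<exists>c. \<forall>x\<in>X. w x = c * v x))"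

lemma perron_eigenpair_exists:
  fixes K :: "'a \<Rightarrow> 'a \<Rightarrow> real"
  assumes fin: "finite X" and ne: "X \<noteq> {}" and sym: "\<forall>x\<in>X. \<forall>y\<in>X. K x y = K y x"
    and pos: "\<forall>x\<in>X. \<forall>y\<in>X. K x y > 0"
  shows "\<exists>g v. perron_eigenpair X K g v"
proof -
  obtain g u where bound: "\<And>w. quad_form X K w \<le> g * sqnorm X w"
      and u: "sqnorm X u = 1" "quad_form X K u = g"
    using rayleigh_quotient_max_attained[OF fin ne] by blast
  have "\<exists>x\<in>X. u x \<noteq> 0" using u(1) sqnorm_pos_iff[OF fin, of u] by simp
  note maximiser = positive_kernel_rayleigh_maximiser[OF fin sym pos bound _ this]
  define v where "v x = \<bar>u x\<bar>" for x
  have v: "g > 0" "\<forall>x\<in>X. v x > 0" "\<forall>x\<in>X. mat_app X K v x = g * v x"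
    using maximiser u by (auto simp: v_def[abs_def])
  have "\<exists>c. \<forall>x\<in>X. w x = c * v x" if w: "\<forall>x\<in>X. mat_app X K w x = g * w x" for w
  proof -
    obtain x1 where x1: "x1 \<in> X" using ne by auto
    define c where "c = w x1 / v x1"
    define z where "z x = w x - c * v x" for x
    have "mat_app X K z x = g * z x" if "x \<in> X" for x
    proof -
      have "mat_app X K z x = mat_app X K w x - c * mat_app X K v x"
        unfolding z_def mat_app_def by (simp add: algebra_simps sum_subtractf sum_distrib_left)
      then show ?thesis using w v that by (simp add: z_def algebra_simps)
    qed
    then have "quad_form X K z = g * sqnorm X z" by (simp add: quad_form_eigenvector)
    moreover have "z x1 = 0" using v(2) x1 by (simp add: z_def c_def less_imp_neq[symmetric])
    ultimately have "\<not> (\<exists>x\<in>X. z x \<noteq> 0)"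
      using positive_kernel_rayleigh_maximiser(2)[OF fin sym pos bound] x1 by blast
    then show ?thesis by (auto simp: z_def)
  qed
  then show ?thesis using v bound unfolding perron_eigenpair_def by blast
qed

definition perron_root :: "'a set \<Rightarrow> ('a \<Rightarrow> 'a \<Rightarrow> real) \<Rightarrow> real" where
  "perron_root X K = (SOME g. \<exists>v. perron_eigenpair X K g v)"

definition perron_vector :: "'a set \<Rightarrow> ('a \<Rightarrow> 'a \<Rightarrow> real) \<Rightarrow> 'a \<Rightarrow> real" where
  "perron_vector X K = (SOME v. perron_eigenpair X K (perron_root X K) v)"

lemma perron_eigenpair_root_vector:
  assumes "finite X" "X \<noteq> {}" "\<forall>x\<in>X. \<forall>y\<in>X. K x y = K y x" "\<forall>x\<in>X. \<forall>y\<in>X. K x y > 0"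
  shows "perron_eigenpair X K (perron_root X K) (perron_vector X K)"
proof -
  have "\<exists>v. perron_eigenpair X K (perron_root X K) v"
    unfolding perron_root_def by (rule someI_ex[OF perron_eigenpair_exists[OF assms]])
  then show ?thesis unfolding perron_vector_def by (rule someI_ex)
qed

lemma perron_eigenpair_sqnorm_pos:
  "finite X \<Longrightarrow> X \<noteq> {} \<Longrightarrow> perron_eigenpair X K g v \<Longrightarrow> 0 < sqnorm X v"
  unfolding perron_eigenpair_def using sqnorm_pos_iff[of X v] by (metis ex_in_conv less_irrefl)

lemma perron_eigenpair_quad_form:
  "perron_eigenpair X K g v \<Longrightarrow> quad_form X K v = g * sqnorm X v"
  unfolding perron_eigenpair_def by (blast intro: quad_form_eigenvector)

lemma perron_eigenpair_le:
  assumes fin: "finite X" and ne: "X \<noteq> {}" and pair: "perron_eigenpair X K g v"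
    and bound: "\<And>w. quad_form X K w \<le> h * sqnorm X w"
  shows "g \<le> h"
proof -
  have "g * sqnorm X v = quad_form X K v"
    using perron_eigenpair_quad_form[OF pair] by simp
  also have "\<dots> \<le> h * sqnorm X v" by (rule bound)
  finally show ?thesis using perron_eigenpair_sqnorm_pos[OF fin ne pair] by simp
qed

lemma quad_form_perturbation_bound:
  assumes d: "\<forall>x\<in>X. \<forall>y\<in>X. \<bar>K1 x y - K2 x y\<bar> \<le> d"
  shows "quad_form X K1 v \<le> quad_form X K2 v + d * real (card X) * sqnorm X v"
proof -
  have "quad_form X K1 v - quad_form X K2 v = (\<Sum>x\<in>X. \<Sum>y\<in>X. v x * (K1 x y - K2 x y) * v y)"
    unfolding quad_form_def sum_subtractf[symmetric] by (simp add: algebra_simps)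
  also have "\<dots> \<le> (\<Sum>x\<in>X. \<Sum>y\<in>X. d / 2 * (v x)\<^sup>2 + d / 2 * (v y)\<^sup>2)"
  proof (intro sum_mono)
    fix x y assume xy: "x \<in> X" "y \<in> X"
    have d0: "0 \<le> d" using d xy by (meson abs_ge_zero order_trans)
    have "v x * (K1 x y - K2 x y) * v y \<le> \<bar>v x\<bar> * \<bar>v y\<bar> * \<bar>K1 x y - K2 x y\<bar>"
      by (simp add: abs_mult[symmetric] mult_ac)
    also have "\<dots> \<le> \<bar>v x\<bar> * \<bar>v y\<bar> * d" using d xy by (intro mult_left_mono) auto
    also have "\<dots> \<le> d / 2 * (v x)\<^sup>2 + d / 2 * (v y)\<^sup>2"
    proof -
      have "2 * (\<bar>v x\<bar> * \<bar>v y\<bar>) \<le> (v x)\<^sup>2 + (v y)\<^sup>2"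
        using sum_squares_bound[of "\<bar>v x\<bar>" "\<bar>v y\<bar>"] by (simp add: power2_eq_square)
      from mult_left_mono[OF this d0] show ?thesis by (simp add: algebra_simps)
    qed
    finally show "v x * (K1 x y - K2 x y) * v y \<le> d / 2 * (v x)\<^sup>2 + d / 2 * (v y)\<^sup>2" .
  qed
  also have "\<dots> = d * real (card X) * sqnorm X v"
  proof -
    have A: "(\<Sum>x\<in>X. \<Sum>y\<in>X. d / 2 * (v x)\<^sup>2) = real (card X) * (d / 2 * sqnorm X v)"
      by (simp add: sqnorm_def sum_distrib_left mult.left_commute)
    have B: "(\<Sum>x\<in>X. \<Sum>y\<in>X. d / 2 * (v y)\<^sup>2) = real (card X) * (d / 2 * sqnorm X v)"
      by (simp add: sqnorm_def sum_distrib_left)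
    show ?thesis unfolding sum.distrib A B by (simp add: algebra_simps)
  qed
  finally show ?thesis by simp
qed

lemma perron_eigenpair_perturbation:
  assumes "finite X" "X \<noteq> {}" "perron_eigenpair X K1 g1 v1" "perron_eigenpair X K2 g2 v2"
    and "\<forall>x\<in>X. \<forall>y\<in>X. \<bar>K1 x y - K2 x y\<bar> \<le> d"
  shows "g1 \<le> g2 + d * real (card X)"
proof (rule perron_eigenpair_le[OF assms(1-3)])
  fix w
  have "quad_form X K1 w \<le> quad_form X K2 w + d * real (card X) * sqnorm X w"
    by (rule quad_form_perturbation_bound[OF assms(5)])
  also have "\<dots> \<le> (g2 + d * real (card X)) * sqnorm X w"
    using assms(4) by (simp add: perron_eigenpair_def algebra_simps)
  finally show "quad_form X K1 w \<le> (g2 + d * real (card X)) * sqnorm X w" .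
qed

lemma perron_eigenpair_strict_mono:
  assumes fin: "finite X" and ne: "X \<noteq> {}"
    and pair1: "perron_eigenpair X K1 g1 v1" and pair2: "perron_eigenpair X K2 g2 v2"
    and le: "\<forall>x\<in>X. \<forall>y\<in>X. K1 x y \<le> K2 x y" and lt: "x0 \<in> X" "K1 x0 x0 < K2 x0 x0"
  shows "g1 < g2"
proof -
  have v1: "\<forall>x\<in>X. v1 x > 0" using pair1 by (simp add: perron_eigenpair_def)
  have term_le: "v1 x * K1 x y * v1 y \<le> v1 x * K2 x y * v1 y" if "x \<in> X" "y \<in> X" for x y
    using v1 le that by (simp add: less_imp_le mult_left_mono mult_right_mono)
  have "g1 * sqnorm X v1 = quad_form X K1 v1"
    using perron_eigenpair_quad_form[OF pair1] by simp
  also have "\<dots> < quad_form X K2 v1"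
    unfolding quad_form_def
  proof (rule sum_strict_mono_ex1[OF fin])
    show "\<forall>x\<in>X. (\<Sum>y\<in>X. v1 x * K1 x y * v1 y) \<le> (\<Sum>y\<in>X. v1 x * K2 x y * v1 y)"
      using term_le by (auto intro: sum_mono)
    have "v1 x0 * K1 x0 x0 * v1 x0 < v1 x0 * K2 x0 x0 * v1 x0" using v1 lt by simp
    then have "(\<Sum>y\<in>X. v1 x0 * K1 x0 y * v1 y) < (\<Sum>y\<in>X. v1 x0 * K2 x0 y * v1 y)"
      using term_le lt(1) by (intro sum_strict_mono_ex1[OF fin]) auto
    then show "\<exists>x\<in>X. (\<Sum>y\<in>X. v1 x * K1 x y * v1 y) < (\<Sum>y\<in>X. v1 x * K2 x y * v1 y)"
      using lt(1) by blast
  qed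
  also have "\<dots> \<le> g2 * sqnorm X v1" using pair2 by (simp add: perron_eigenpair_def)
  finally show ?thesis using perron_eigenpair_sqnorm_pos[OF fin ne pair1] by simp
qed

lemma has_sum_diff:
  fixes f g :: "'a \<Rightarrow> real"
  assumes "(f has_sum s) A" "(g has_sum t) A"
  shows "((\<lambda>x. f x - g x) has_sum (s - t)) A"
  using has_sum_add[OF assms(1) has_sum_cmult_right[OF assms(2), of "-1"]] by simp

lemma has_sum_sum:
  fixes f :: "'i \<Rightarrow> 'a \<Rightarrow> real"
  assumes "finite I" "\<And>i. i \<in> I \<Longrightarrow> (f i has_sum s i) A"
  shows "((\<lambda>x. \<Sum>i\<in>I. f i x) has_sum (\<Sum>i\<in>I. s i)) A"
  using assms by (induction I rule: finite_induct) (auto intro: has_sum_add)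

lemma has_sum_UNIV_shift:
  fixes f :: "'a::ab_group_add \<Rightarrow> real"
  shows "((\<lambda>x. f (x - y)) has_sum s) UNIV \<longleftrightarrow> (f has_sum s) UNIV"
  by (rule has_sum_reindex_bij_betw) (rule bij_betwI[of _ _ _ "\<lambda>x. x + y"], auto)

lemma has_sum_UNIV_reflect:
  fixes f :: "'a::ab_group_add \<Rightarrow> real"
  shows "((\<lambda>y. f (x - y)) has_sum s) UNIV \<longleftrightarrow> (f has_sum s) UNIV"
  by (rule has_sum_reindex_bij_betw) (rule bij_betwI[of _ _ _ "\<lambda>y. x - y"], auto)

lemma summable_on_UNIV_shift:
  fixes f :: "'a::ab_group_add \<Rightarrow> real"
  shows "(\<lambda>x. f (x - y)) summable_on UNIV \<longleftrightarrow> f summable_on UNIV"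
  using has_sum_UNIV_shift by (metis summable_on_def)

lemma summable_on_UNIV_reflect:
  fixes f :: "'a::ab_group_add \<Rightarrow> real"
  shows "(\<lambda>y. f (x - y)) summable_on UNIV \<longleftrightarrow> f summable_on UNIV"
  using has_sum_UNIV_reflect by (metis summable_on_def)

lemma has_sum_nonneg_term_le:
  fixes f :: "'a \<Rightarrow> real"
  assumes "(f has_sum s) UNIV" "\<And>x. f x \<ge> 0"
  shows "f x \<le> s"
  using finite_sum_le_has_sum[OF assms(1), of "{x}"] assms(2) by simp

lemma nonneg_has_sum_swap:
  fixes h :: "'a \<Rightarrow> 'b \<Rightarrow> real"
  assumes h0: "\<And>x y. h x y \<ge> 0"
    and inner: "\<And>x. (h x has_sum s x) UNIV" and outer: "(s has_sum S) UNIV"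
  shows "\<And>y. (\<lambda>x. h x y) summable_on UNIV"
    and "((\<lambda>y. \<Sum>\<^sub>\<infinity>x. h x y) has_sum S) UNIV"
proof -
  have inner': "((\<lambda>y. case_prod h (x, y)) has_sum s x) UNIV" for x using inner by simp
  have "case_prod h summable_on UNIV \<times> UNIV"
    using summable_on_SigmaI[OF inner' has_sum_imp_summable[OF outer]] h0 by auto
  then have "(case_prod h has_sum S) (UNIV \<times> UNIV)"
    using has_sum_SigmaI[OF inner' outer] by simp
  then have swapped: "((\<lambda>(y, x). h x y) has_sum S) (UNIV \<times> UNIV)"
    by (subst has_sum_swap) (simp add: case_prod_unfold)
  show summable: "(\<lambda>x. h x y) summable_on UNIV" for y
    using summable_on_SigmaD1[OF has_sum_imp_summable[OF swapped]] by simp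
  show "((\<lambda>y. \<Sum>\<^sub>\<infinity>x. h x y) has_sum S) UNIV"
    by (rule has_sum_Sigma'[OF swapped]) (use summable in auto)
qed

lemma square_summable_attains_max_abs:
  fixes w :: "'a \<Rightarrow> real"
  assumes "(\<lambda>x. (w x)\<^sup>2) summable_on UNIV"
  obtains x0 where "\<And>x. \<bar>w x\<bar> \<le> \<bar>w x0\<bar>"
proof (cases "\<forall>x. w x = 0")
  case True then show ?thesis using that by auto
next
  case False
  then obtain x1 where x1: "w x1 \<noteq> 0" by auto
  define T where "T = {x. (w x)\<^sup>2 \<ge> (w x1)\<^sup>2}"
  obtain S where S: "((\<lambda>x. (w x)\<^sup>2) has_sum S) UNIV" using assms summable_on_def by blast
  have "finite T"
  proof (rule ccontr)
    assume "infinite T"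
    obtain n :: nat where n: "real n * (w x1)\<^sup>2 > S"
      using reals_Archimedean3[of "(w x1)\<^sup>2"] x1 by auto
    obtain F where F: "F \<subseteq> T" "finite F" "card F = n"
      using infinite_arbitrarily_large[OF \<open>infinite T\<close>] by blast
    have "real n * (w x1)\<^sup>2 = (\<Sum>x\<in>F. (w x1)\<^sup>2)" using F by simp
    also have "\<dots> \<le> (\<Sum>x\<in>F. (w x)\<^sup>2)" using F by (intro sum_mono) (auto simp: T_def)
    also have "\<dots> \<le> S" using finite_sum_le_has_sum[OF S F(2)] by simp
    finally show False using n by simp
  qed
  moreover have "x1 \<in> T" by (simp add: T_def)
  ultimately obtain x0 where x0: "x0 \<in> T" "Max ((\<lambda>x. (w x)\<^sup>2) ` T) = (w x0)\<^sup>2"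
    using obtains_MAX by blast
  have "(w x)\<^sup>2 \<le> (w x0)\<^sup>2" for x
  proof (cases "x \<in> T")
    case True
    then show ?thesis using x0(2) Max_ge[of "(\<lambda>x. (w x)\<^sup>2) ` T"] \<open>finite T\<close> by simp
  qed (use x0(1) in \<open>auto simp: T_def\<close>)
  then show ?thesis using that by (metis abs_le_square_iff)
qed

lemma l2_add: "u \<in> l2 \<Longrightarrow> v \<in> l2 \<Longrightarrow> (\<lambda>x. u x + v x) \<in> l2"
proof -
  assume "u \<in> l2" "v \<in> l2"
  then have "(\<lambda>x. 2 * (u x)\<^sup>2 + 2 * (v x)\<^sup>2) summable_on UNIV"
    unfolding l2_def by (intro summable_on_add summable_on_cmult_right) auto
  moreover have "(u x + v x)\<^sup>2 \<le> 2 * (u x)\<^sup>2 + 2 * (v x)\<^sup>2" for x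
    using sum_squares_bound[of "u x" "v x"] by (simp add: power2_sum)
  ultimately show ?thesis
    unfolding l2_def by (auto intro: summable_on_comparison_test)
qed

lemma l2_scale: "u \<in> l2 \<Longrightarrow> (\<lambda>x. t * u x) \<in> l2"
  unfolding l2_def by (simp add: power_mult_distrib summable_on_cmult_right)

lemma l2_diff: "u \<in> l2 \<Longrightarrow> v \<in> l2 \<Longrightarrow> (\<lambda>x. u x - v x) \<in> l2"
  using l2_add[of u "\<lambda>x. (-1) * v x"] l2_scale[of v "-1"] by simp

lemma l2_sum: "finite I \<Longrightarrow> (\<And>i. i \<in> I \<Longrightarrow> f i \<in> l2) \<Longrightarrow> (\<lambda>x. \<Sum>i\<in>I. f i x) \<in> l2"
proof (induction I rule: finite_induct)
  case empty then show ?case by (simp add: l2_def)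
qed (auto intro: l2_add)

lemma l2_shift: "u \<in> l2 \<Longrightarrow> (\<lambda>x. u (x - y)) \<in> l2"
  unfolding l2_def using summable_on_UNIV_shift[of "\<lambda>x. (u x)\<^sup>2"] by simp

lemma upclosed_without_min_eq_greaterThan_Inf:
  fixes S :: "real set"
  assumes ne: "S \<noteq> {}" and bdd: "bdd_below S"
    and up: "\<And>x y. x \<in> S \<Longrightarrow> x \<le> y \<Longrightarrow> y \<in> S" and no_min: "\<And>x. x \<in> S \<Longrightarrow> \<exists>y\<in>S. y < x"
  shows "S = {Inf S<..}"
proof (intro set_eqI iffI)
  fix x assume "x \<in> S"
  then obtain y where "y \<in> S" "y < x" using no_min by blast
  then show "x \<in> {Inf S<..}" using cInf_lower[OF _ bdd] by fastforce
next
  fix x assume "x \<in> {Inf S<..}"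
  then obtain y where "y \<in> S" "y < x" using cInf_less_iff[OF ne bdd] by auto
  then show "x \<in> S" using up by auto
qed

lemma Inf_right_germs_greaterThan:
  fixes t :: real
  assumes "\<And>\<beta>. P \<beta> \<longleftrightarrow> t < \<beta>"
  shows "Inf {b. \<exists>\<epsilon>>0. \<forall>\<beta>. b < \<beta> \<and> \<beta> < b + \<epsilon> \<longrightarrow> P \<beta>} = t"
proof -
  have "{b. \<exists>\<epsilon>>0. \<forall>\<beta>. b < \<beta> \<and> \<beta> < b + \<epsilon> \<longrightarrow> P \<beta>} = {t..}"
  proof (intro set_eqI iffI)
    fix b assume "b \<in> {b. \<exists>\<epsilon>>0. \<forall>\<beta>. b < \<beta> \<and> \<beta> < b + \<epsilon> \<longrightarrow> P \<beta>}"
    then obtain \<epsilon> where \<epsilon>: "\<epsilon> > 0" "\<And>\<beta>. b < \<beta> \<Longrightarrow> \<beta> < b + \<epsilon> \<Longrightarrow> t < \<beta>"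
      using assms by blast
    show "b \<in> {t..}"
    proof (rule ccontr)
      assume "b \<notin> {t..}"
      then have "b < min t (b + \<epsilon> / 2)" "min t (b + \<epsilon> / 2) < b + \<epsilon>" using \<epsilon>(1) by auto
      from \<epsilon>(2)[OF this] show False by simp
    qed
  next
    fix b assume "b \<in> {t..}"
    then have "\<forall>\<beta>. b < \<beta> \<and> \<beta> < b + 1 \<longrightarrow> P \<beta>" using assms by auto
    then show "b \<in> {b. \<exists>\<epsilon>>0. \<forall>\<beta>. b < \<beta> \<and> \<beta> < b + \<epsilon> \<longrightarrow> P \<beta>}" using zero_less_one by blast
  qed
  then show ?thesis by simp
qed

section \<open>The Green function of the random walk\<close>

lemma geometric_resolvent_has_sum:
  fixes c l :: real
  assumes c: "c > 0" and l: "l > 0"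
  shows "((\<lambda>n. c ^ n / (l + c) ^ Suc n) has_sum 1 / l) UNIV"
proof -
  define r where "r = c / (l + c)"
  have "norm r < 1" using l c by (simp add: r_def)
  from sums_mult2[OF geometric_sums[OF this], of "1 / (l + c)"]
  have "(\<lambda>n. c ^ n / (l + c) ^ Suc n) sums (1 / l)"
    using l c by (simp add: r_def power_divide field_simps)
  then show ?thesis by (rule sums_nonneg_imp_has_sum) (use l c in simp)
qed

locale random_walk =
  fixes a :: "int ^ 'd \<Rightarrow> real"
  assumes walk_kernel: "walk_kernel a"
begin

text \<open>With \<open>c = -a(0)\<close> the generator splits as \<open>\<A> = P - c\<close>, where \<open>P\<close> is convolution with the
  nonnegative kernel \<open>p\<close> of total mass \<open>c\<close>. Hence the resolvent kernel
  \<open>(l - \<A>)\<^sup>-\<^sup>1 \<delta>\<^sub>0\<close> is the Neumann series \<open>\<Sum>\<^sub>n p\<^sup>*\<^sup>n / (l + c)\<^sup>n\<^sup>+\<^sup>1\<close>.\<close>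

definition c :: real where "c = - a 0"

definition p :: "int ^ 'd \<Rightarrow> real" where "p z = a z + (if z = 0 then c else 0)"

lemma c_pos: "c > 0"
  using walk_kernel by (simp add: walk_kernel_def c_def)

lemma p_nonneg: "p z \<ge> 0"
  using walk_kernel by (cases "z = 0") (auto simp: walk_kernel_def p_def c_def)

lemma p_sym: "p (- z) = p z"
  using walk_kernel by (auto simp: walk_kernel_def p_def)

lemma p_has_sum: "(p has_sum c) UNIV"
proof -
  have "(a has_sum 0) UNIV" using walk_kernel by (simp add: walk_kernel_def)
  moreover have "((\<lambda>z. if z = 0 then c else 0) has_sum c) UNIV"
    by (rule has_sum_finite_neutralI[of "{0}"]) auto
  ultimately show ?thesis unfolding p_def[abs_def] using has_sum_add by fastforce
qed

lemma p_translate_has_sum: "((\<lambda>x. p (x - y) * g) has_sum (c * g)) UNIV"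
  using has_sum_cmult_left[OF p_has_sum[folded has_sum_UNIV_shift[of p y]], of g] by simp

lemma p_reflect_has_sum: "((\<lambda>y. p (x - y) * g) has_sum (c * g)) UNIV"
  using has_sum_cmult_left[OF p_has_sum[folded has_sum_UNIV_reflect[of p x]], of g] by simp

lemma a_conv_summable:
  assumes u: "u \<in> l2"
  shows "(\<lambda>y. a (x - y) * u y) summable_on UNIV"
proof -
  obtain x0 where x0: "\<And>x. \<bar>u x\<bar> \<le> \<bar>u x0\<bar>"
    using square_summable_attains_max_abs u unfolding l2_def by blast
  have "a summable_on UNIV" using walk_kernel by (auto simp: walk_kernel_def summable_on_def)
  then have "(\<lambda>y. \<bar>a (x - y)\<bar>) summable_on UNIV"
    using summable_on_UNIV_reflect[of "\<lambda>z. \<bar>a z\<bar>"] summable_on_iff_abs_summable_on_real by auto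
  then have "(\<lambda>y. \<bar>a (x - y)\<bar> * \<bar>u x0\<bar>) summable_on UNIV" by (rule summable_on_cmult_left)
  moreover have "norm (a (x - y) * u y) \<le> \<bar>a (x - y)\<bar> * \<bar>u x0\<bar>" for y
    by (simp add: abs_mult mult_left_mono x0)
  ultimately have "(\<lambda>y. norm (a (x - y) * u y)) summable_on UNIV"
    by (rule summable_on_comparison_test) auto
  then show ?thesis using summable_on_iff_abs_summable_on_real by blast
qed

lemma opA_has_sum: "u \<in> l2 \<Longrightarrow> ((\<lambda>y. a (x - y) * u y) has_sum opA a u x) UNIV"
  unfolding opA_def using a_conv_summable summable_iff_has_sum_infsum by blast

primrec p_pow :: "nat \<Rightarrow> int ^ 'd \<Rightarrow> real" where
  "p_pow 0 = (\<lambda>z. if z = 0 then 1 else 0)"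
| "p_pow (Suc n) = (\<lambda>x. \<Sum>\<^sub>\<infinity>y. p (x - y) * p_pow n y)"

lemma p_pow_nonneg_has_sum: "(\<forall>x. p_pow n x \<ge> 0) \<and> (p_pow n has_sum c ^ n) UNIV"
proof (induction n)
  case 0
  have "(p_pow 0 has_sum 1) UNIV"
    by (simp, rule has_sum_finite_neutralI[of "{0}"]) auto
  then show ?case by simp
next
  case (Suc n)
  have "((\<lambda>y. c * p_pow n y) has_sum (c * c ^ n)) UNIV"
    using has_sum_cmult_right Suc.IH by blast
  then have "((\<lambda>x. \<Sum>\<^sub>\<infinity>y. p (x - y) * p_pow n y) has_sum (c * c ^ n)) UNIV"
    by (intro nonneg_has_sum_swap(2)[OF _ p_translate_has_sum]) (use Suc p_nonneg in simp)
  moreover have "\<forall>x. p_pow (Suc n) x \<ge> 0"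
    using Suc p_nonneg by (auto intro!: infsum_nonneg)
  ultimately show ?case by simp
qed

lemma p_pow_nonneg: "p_pow n x \<ge> 0"
  using p_pow_nonneg_has_sum by blast

lemma p_pow_has_sum: "(p_pow n has_sum c ^ n) UNIV"
  using p_pow_nonneg_has_sum by blast

lemma p_pow_le: "p_pow n x \<le> c ^ n"
  by (rule has_sum_nonneg_term_le[OF p_pow_has_sum p_pow_nonneg])

lemma p_pow_Suc_has_sum: "((\<lambda>y. p (x - y) * p_pow n y) has_sum p_pow (Suc n) x) UNIV"
proof -
  have "((\<lambda>y. c * p_pow n y) has_sum (c * c ^ n)) UNIV"
    by (rule has_sum_cmult_right[OF p_pow_has_sum])
  then have "(\<lambda>y. p (x - y) * p_pow n y) summable_on UNIV"
    by (intro nonneg_has_sum_swap(1)[OF _ p_translate_has_sum]) (use p_pow_nonneg p_nonneg in simp)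
  then show ?thesis by (simp add: summable_iff_has_sum_infsum)
qed

lemma p_pow_sym: "p_pow n (- x) = p_pow n x"
proof (induction n arbitrary: x)
  case (Suc n)
  have bij: "bij_betw uminus (UNIV :: (int ^ 'd) set) UNIV"
    by (rule bij_betwI[of _ _ _ uminus]) auto
  have "p_pow (Suc n) (- x) = (\<Sum>\<^sub>\<infinity>y. p (- x - (- y)) * p_pow n (- y))"
    using infsum_reindex_bij_betw[OF bij, of "\<lambda>y. p (- x - y) * p_pow n y"] by simp
  also have "\<dots> = p_pow (Suc n) x"
    using Suc p_sym[of "x - y" for y] by (simp add: algebra_simps)
  finally show ?case .
qed simp

lemma p_pow_reaches: "\<exists>n. p_pow n z > 0"
proof -
  obtain zs where zs: "\<forall>w\<in>set zs. a w \<noteq> 0" "sum_list zs = z"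
    using walk_kernel unfolding walk_kernel_def by blast
  have "\<exists>n. p_pow n (sum_list zs) > 0" using zs(1)
  proof (induction zs)
    case (Cons w zs)
    then obtain n where n: "p_pow n (sum_list zs) > 0" by auto
    show ?case
    proof (cases "w = 0")
      case False
      then have "p w > 0"
        using Cons.prems walk_kernel by (auto simp: walk_kernel_def order_le_less p_def)
      then have "0 < p w * p_pow n (sum_list zs)" using n by simp
      also have "\<dots> \<le> p_pow (Suc n) (sum_list (w # zs))"
        using has_sum_nonneg_term_le[OF p_pow_Suc_has_sum, of "sum_list (w # zs)" n "sum_list zs"]
        by (simp add: p_nonneg p_pow_nonneg)
      finally show ?thesis by blast
    qed (use n in auto)
  qed (intro exI[of _ 0], simp)
  then show ?thesis using zs by auto
qed

definition green :: "real \<Rightarrow> int ^ 'd \<Rightarrow> real" where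
  "green l x = (\<Sum>\<^sub>\<infinity>n. p_pow n x / (l + c) ^ Suc n)"

lemma green_series_has_sum:
  assumes l: "l > 0"
  shows "((\<lambda>n. p_pow n x / (l + c) ^ Suc n) has_sum green l x) UNIV"
proof -
  have "(\<lambda>n. p_pow n x / (l + c) ^ Suc n) summable_on UNIV"
    by (rule summable_on_comparison_test[OF has_sum_imp_summable[OF geometric_resolvent_has_sum[OF c_pos l]]])
       (use l c_pos p_pow_le p_pow_nonneg in \<open>auto intro: divide_right_mono\<close>)
  then show ?thesis by (simp add: green_def summable_iff_has_sum_infsum)
qed

lemma green_has_sum:
  assumes l: "l > 0"
  shows "(green l has_sum 1 / l) UNIV"
proof -
  have "((\<lambda>x. p_pow n x / (l + c) ^ Suc n) has_sum c ^ n / (l + c) ^ Suc n) UNIV" for n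
    using has_sum_cmult_left[OF p_pow_has_sum, of n "1 / (l + c) ^ Suc n"] by simp
  from nonneg_has_sum_swap(2)[OF _ this geometric_resolvent_has_sum[OF c_pos l]]
  show ?thesis using l c_pos p_pow_nonneg by (simp add: green_def[abs_def])
qed

lemma green_nonneg: "l > 0 \<Longrightarrow> green l x \<ge> 0"
  unfolding green_def by (rule infsum_nonneg) (use c_pos p_pow_nonneg in simp)

lemma green_le: "l > 0 \<Longrightarrow> green l x \<le> 1 / l"
  by (rule has_sum_nonneg_term_le[OF green_has_sum]) (auto simp: green_nonneg)

lemma green_sym: "green l (- x) = green l x"
  unfolding green_def by (simp add: p_pow_sym)

lemma green_pos:
  assumes l: "l > 0"
  shows "green l x > 0"
proof -
  obtain n where "p_pow n x > 0" using p_pow_reaches by blast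
  then show ?thesis
    by (intro has_sum_strict_mono[OF has_sum_0 green_series_has_sum[OF l] _ UNIV_I[of n]])
       (use l c_pos p_pow_nonneg in auto)
qed

lemma green_l2:
  assumes l: "l > 0"
  shows "green l \<in> l2"
proof -
  have "(\<lambda>x. green l x * (1 / l)) summable_on UNIV"
    using summable_on_cmult_left has_sum_imp_summable[OF green_has_sum[OF l]] by blast
  moreover have "(green l x)\<^sup>2 \<le> green l x * (1 / l)" for x
    unfolding power2_eq_square using green_le[OF l] green_nonneg[OF l] by (rule mult_left_mono)
  ultimately show ?thesis
    unfolding l2_def by (auto intro: summable_on_comparison_test)
qed

lemma p_conv_green_has_sum:
  assumes l: "l > 0"
  shows "((\<lambda>y. p (x - y) * green l y) has_sum ((l + c) * green l x - p_pow 0 x)) UNIV"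
proof -
  define f where "f n = p_pow n x / (l + c) ^ Suc n" for n
  have lc: "l + c > 0" using l c_pos by simp
  have "f sums green l x"
    unfolding f_def by (rule has_sum_imp_sums[OF green_series_has_sum[OF l]])
  then have "(\<lambda>n. f (Suc n)) sums (green l x - f 0)"
    using sums_Suc_iff by (metis diff_add_cancel)
  then have "(\<lambda>n. (l + c) * f (Suc n)) sums ((l + c) * (green l x - f 0))"
    by (rule sums_mult)
  moreover have "(l + c) * (green l x - f 0) = (l + c) * green l x - p_pow 0 x"
    using lc by (simp add: f_def field_simps del: p_pow.simps)
  moreover have "(l + c) * f (Suc n) = p_pow (Suc n) x / (l + c) ^ Suc n" for n
    using lc unfolding f_def by (simp del: p_pow.simps power_Suc add: power_Suc[of "l + c" "Suc n"])
  ultimately have "(\<lambda>n. p_pow (Suc n) x / (l + c) ^ Suc n) sums ((l + c) * green l x - p_pow 0 x)"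
    by simp
  then have outer: "((\<lambda>n. p_pow (Suc n) x / (l + c) ^ Suc n) has_sum ((l + c) * green l x - p_pow 0 x)) UNIV"
    by (rule sums_nonneg_imp_has_sum) (use lc p_pow_nonneg in \<open>simp del: p_pow.simps\<close>)
  have inner: "((\<lambda>y. p (x - y) * (p_pow n y / (l + c) ^ Suc n)) has_sum p_pow (Suc n) x / (l + c) ^ Suc n) UNIV" for n
    using has_sum_cmult_left[OF p_pow_Suc_has_sum, of x n "1 / (l + c) ^ Suc n"] by simp
  have "((\<lambda>y. \<Sum>\<^sub>\<infinity>n. p (x - y) * (p_pow n y / (l + c) ^ Suc n)) has_sum
      ((l + c) * green l x - p_pow 0 x)) UNIV"
    by (rule nonneg_has_sum_swap(2)[OF _ inner outer]) (use lc p_pow_nonneg p_nonneg in simp)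
  moreover have "(\<lambda>y. \<Sum>\<^sub>\<infinity>n. p (x - y) * (p_pow n y / (l + c) ^ Suc n)) = (\<lambda>y. p (x - y) * green l y)"
    by (rule ext, simp only: green_def infsum_cmult_right')
  ultimately show ?thesis by simp
qed

lemma green_resolvent_has_sum:
  assumes l: "l > 0"
  shows "((\<lambda>y. a (x - y) * green l y) has_sum (l * green l x - (if x = 0 then 1 else 0))) UNIV"
proof -
  have "((\<lambda>y. if y = x then c * green l y else 0) has_sum c * green l x) UNIV"
    by (rule has_sum_finite_neutralI[of "{x}"]) auto
  from has_sum_diff[OF p_conv_green_has_sum[OF l, of x] this]
  have "((\<lambda>y. p (x - y) * green l y - (if y = x then c * green l y else 0)) has_sum
      (l * green l x - (if x = 0 then 1 else 0))) UNIV"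
    by (simp add: algebra_simps del: if_image_distrib)
  moreover have "p (x - y) * green l y - (if y = x then c * green l y else 0) = a (x - y) * green l y" for y
    by (simp add: p_def algebra_simps)
  ultimately show ?thesis by simp
qed

lemma green_series_term_antimono:
  assumes "0 < l" "l \<le> m"
  shows "p_pow n x / (m + c) ^ Suc n \<le> p_pow n x / (l + c) ^ Suc n"
proof -
  have "(l + c) ^ Suc n \<le> (m + c) ^ Suc n" using assms c_pos by (intro power_mono) auto
  moreover have "0 < (m + c) ^ Suc n * (l + c) ^ Suc n" using assms c_pos by simp
  ultimately show ?thesis by (rule divide_left_mono[OF _ p_pow_nonneg])
qed

lemma green_antimono:
  assumes "0 < l" "l \<le> m"
  shows "green m x \<le> green l x"
  using assms green_series_term_antimono
  by (intro has_sum_mono[OF green_series_has_sum green_series_has_sum]) auto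

lemma green_strict_antimono_origin:
  assumes l: "0 < l" and lm: "l < m"
  shows "green m 0 < green l 0"
proof (rule has_sum_strict_mono[OF green_series_has_sum green_series_has_sum _ UNIV_I[of 0]])
  show "p_pow 0 0 / (m + c) ^ Suc 0 < p_pow 0 0 / (l + c) ^ Suc 0"
    using l lm c_pos by (simp add: frac_less2)
qed (use assms green_series_term_antimono in auto)

text \<open>Maximum principle for \<open>l - \<A>\<close>: at a site where \<open>|w|\<close> is maximal, \<open>(\<A> w)(x\<^sub>0) w(x\<^sub>0) \<le> 0\<close>
  because \<open>p\<close> is nonnegative with mass \<open>c = -a(0)\<close>.\<close>
lemma resolvent_max_principle:
  assumes w: "w \<in> l2"
    and eq: "\<And>x. ((\<lambda>y. a (x - y) * w y) has_sum (l * w x + f x)) UNIV"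
  obtains x0 where "\<And>x. \<bar>w x\<bar> \<le> \<bar>w x0\<bar>" "l * (w x0)\<^sup>2 \<le> - (f x0 * w x0)"
proof -
  obtain x0 where x0: "\<And>x. \<bar>w x\<bar> \<le> \<bar>w x0\<bar>"
    using square_summable_attains_max_abs w unfolding l2_def by blast
  have "((\<lambda>y. if y = x0 then c * w y else 0) has_sum c * w x0) UNIV"
    by (rule has_sum_finite_neutralI[of "{x0}"]) auto
  from has_sum_add[OF eq[of x0] this]
  have "((\<lambda>y. p (x0 - y) * w y) has_sum (l * w x0 + f x0 + c * w x0)) UNIV"
    by (rule has_sum_cong[THEN iffD1, rotated]) (auto simp: p_def algebra_simps)
  from has_sum_cmult_left[OF this, of "w x0"]
  have "(l * w x0 + f x0 + c * w x0) * w x0 \<le> c * (w x0)\<^sup>2"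
  proof (rule has_sum_mono[OF _ p_reflect_has_sum])
    fix y
    have "w y * w x0 \<le> \<bar>w y\<bar> * \<bar>w x0\<bar>" by (metis abs_ge_self abs_mult)
    also have "\<dots> \<le> \<bar>w x0\<bar> * \<bar>w x0\<bar>" by (intro mult_right_mono x0) simp
    also have "\<dots> = (w x0)\<^sup>2" by (simp add: power2_eq_square)
    finally show "p (x0 - y) * w y * w x0 \<le> p (x0 - y) * (w x0)\<^sup>2"
      using p_nonneg by (simp add: mult.assoc mult_left_mono)
  qed
  then have "l * (w x0)\<^sup>2 \<le> - (f x0 * w x0)" by (simp add: algebra_simps power2_eq_square)
  with x0 that show ?thesis by blast
qed

lemma resolvent_unique:
  assumes "w \<in> l2" and l: "l > 0"
    and "\<And>x. ((\<lambda>y. a (x - y) * w y) has_sum (l * w x + f x)) UNIV"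
    and f: "\<And>x. f x * w x \<ge> 0"
  shows "w x = 0"
proof -
  obtain x0 where x0: "\<And>x. \<bar>w x\<bar> \<le> \<bar>w x0\<bar>" "l * (w x0)\<^sup>2 \<le> - (f x0 * w x0)"
    using resolvent_max_principle assms(1,3) by blast
  have "l * (w x0)\<^sup>2 \<le> 0" using x0(2) f[of x0] by simp
  then have "w x0 = 0" using l by (simp add: mult_le_0_iff)
  then show ?thesis using x0(1)[of x] by simp
qed

lemma resolvent_sup_bound:
  assumes "w \<in> l2" and l: "l > 0"
    and "\<And>x. ((\<lambda>y. a (x - y) * w y) has_sum (l * w x + f x)) UNIV"
    and f: "\<And>x. \<bar>f x\<bar> \<le> F"
  shows "\<bar>w x\<bar> \<le> F / l"
proof -
  obtain x0 where x0: "\<And>x. \<bar>w x\<bar> \<le> \<bar>w x0\<bar>" "l * (w x0)\<^sup>2 \<le> - (f x0 * w x0)"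
    using resolvent_max_principle assms(1,3) by blast
  have *: "l * \<bar>w x0\<bar> * \<bar>w x0\<bar> \<le> F * \<bar>w x0\<bar>"
  proof -
    have "l * \<bar>w x0\<bar> * \<bar>w x0\<bar> \<le> \<bar>f x0\<bar> * \<bar>w x0\<bar>"
      using x0(2) by (simp add: power2_eq_square abs_mult_self_eq mult.assoc abs_mult[symmetric])
    also have "\<dots> \<le> F * \<bar>w x0\<bar>" using f by (rule mult_right_mono) simp
    finally show ?thesis .
  qed
  have "\<bar>w x0\<bar> \<le> F / l"
  proof (cases "w x0 = 0")
    case False
    then have "l * \<bar>w x0\<bar> \<le> F" using * by simp
    then show ?thesis using l by (simp add: field_simps)
  qed (use l f[of x0] in auto)
  then show ?thesis using x0(1) order_trans by blast
qed

lemma green_lipschitz: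
  assumes l: "l > 0" and m: "m > 0"
  shows "\<bar>green l x - green m x\<bar> \<le> \<bar>l - m\<bar> / (l * m)"
proof -
  have "((\<lambda>y. a (x - y) * (green l y - green m y)) has_sum
      (l * (green l x - green m x) + (l - m) * green m x)) UNIV" for x
    using has_sum_diff[OF green_resolvent_has_sum[OF l, of x] green_resolvent_has_sum[OF m, of x]]
    by (simp add: algebra_simps)
  moreover have "\<bar>(l - m) * green m y\<bar> \<le> \<bar>l - m\<bar> / m" for y
    using green_le[OF m] green_nonneg[OF m] by (simp add: abs_mult divide_inverse mult_left_mono)
  ultimately have "\<bar>green l x - green m x\<bar> \<le> \<bar>l - m\<bar> / m / l"
    using l2_diff[OF green_l2[OF l] green_l2[OF m]]
    by (intro resolvent_sup_bound[of "\<lambda>y. green l y - green m y" l]) (use l in auto)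
  then show ?thesis by (simp add: field_simps)
qed

end

section \<open>Reduction to the Green matrix of the sources\<close>

locale point_sources = random_walk a for a :: "int ^ 'd \<Rightarrow> real" +
  fixes xs :: "(int ^ 'd) list"
  assumes distinct_sources: "distinct xs" and sources_nonempty: "xs \<noteq> []"
begin

abbreviation X where "X \<equiv> set xs"

definition green_matrix :: "real \<Rightarrow> int ^ 'd \<Rightarrow> int ^ 'd \<Rightarrow> real" where
  "green_matrix \<mu> x y = green \<mu> (x - y)"

definition top_eig :: "real \<Rightarrow> real" where
  "top_eig \<mu> = perron_root X (green_matrix \<mu>)"

definition top_vec :: "real \<Rightarrow> int ^ 'd \<Rightarrow> real" where
  "top_vec \<mu> = perron_vector X (green_matrix \<mu>)"

lemma sources_ne: "X \<noteq> {}"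
  using sources_nonempty by simp

lemma top_eigenpair: "\<mu> > 0 \<Longrightarrow> perron_eigenpair X (green_matrix \<mu>) (top_eig \<mu>) (top_vec \<mu>)"
  unfolding top_eig_def top_vec_def
  by (rule perron_eigenpair_root_vector)
     (auto simp: sources_nonempty green_matrix_def green_pos intro: green_sym[of _ "_ - _", simplified])

lemma top_eig_pos: "\<mu> > 0 \<Longrightarrow> top_eig \<mu> > 0"
  using top_eigenpair by (simp add: perron_eigenpair_def)

lemma top_eig_lipschitz:
  assumes l: "l > 0" and m: "m > 0"
  shows "\<bar>top_eig l - top_eig m\<bar> \<le> real (card X) * (\<bar>l - m\<bar> / (l * m))"
proof -
  define d where "d = \<bar>l - m\<bar> / (l * m)"
  have "\<forall>x\<in>X. \<forall>y\<in>X. \<bar>green_matrix l x y - green_matrix m x y\<bar> \<le> d"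
    unfolding green_matrix_def d_def using green_lipschitz[OF l m] by blast
  from perron_eigenpair_perturbation[OF _ sources_ne top_eigenpair[OF l] top_eigenpair[OF m] this]
  have "top_eig l \<le> top_eig m + d * real (card X)" by simp
  moreover have "\<forall>x\<in>X. \<forall>y\<in>X. \<bar>green_matrix m x y - green_matrix l x y\<bar> \<le> d"
    unfolding green_matrix_def d_def using green_lipschitz[OF l m] by (metis abs_minus_commute)
  from perron_eigenpair_perturbation[OF _ sources_ne top_eigenpair[OF m] top_eigenpair[OF l] this]
  have "top_eig m \<le> top_eig l + d * real (card X)" by simp
  ultimately show ?thesis by (simp add: d_def abs_le_iff mult_ac)
qed

lemma top_eig_continuous_on: "0 < r \<Longrightarrow> continuous_on {r..} top_eig"
proof (intro lipschitz_on_continuous_on lipschitz_onI)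
  fix l m assume r: "0 < r" and lm: "l \<in> {r..}" "m \<in> {r..}"
  have "\<bar>top_eig l - top_eig m\<bar> \<le> real (card X) * (\<bar>l - m\<bar> / (l * m))"
    using lm r by (intro top_eig_lipschitz) auto
  also have "\<dots> \<le> real (card X) * (\<bar>l - m\<bar> / r\<^sup>2)"
    using lm r by (intro mult_left_mono divide_left_mono) (auto simp: power2_eq_square mult_mono)
  finally show "dist (top_eig l) (top_eig m) \<le> real (card X) / r\<^sup>2 * dist l m"
    by (simp add: dist_real_def)
qed simp

lemma top_eig_le:
  assumes l: "l > 0"
  shows "top_eig l \<le> real (card X) / l"
proof (rule perron_eigenpair_le[OF _ sources_ne top_eigenpair[OF l]])
  fix w
  have "\<forall>x\<in>X. \<forall>y\<in>X. \<bar>green_matrix l x y - 0\<bar> \<le> 1 / l"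
    unfolding green_matrix_def using green_le[OF l] green_nonneg[OF l] by simp
  from quad_form_perturbation_bound[OF this, of w]
  show "quad_form X (green_matrix l) w \<le> real (card X) / l * sqnorm X w"
    by (simp add: quad_form_def)
qed simp

lemma top_eig_strict_antimono:
  assumes l: "l > 0" and lm: "l < m"
  shows "top_eig m < top_eig l"
proof -
  obtain x0 where "x0 \<in> X" using sources_ne by (meson ex_in_conv)
  moreover have "\<forall>x\<in>X. \<forall>y\<in>X. green_matrix m x y \<le> green_matrix l x y"
    unfolding green_matrix_def using green_antimono l lm by simp
  moreover have "green_matrix m x0 x0 < green_matrix l x0 x0"
    unfolding green_matrix_def using green_strict_antimono_origin[OF l lm] by simp
  ultimately show ?thesis
    using l lm by (intro perron_eigenpair_strict_mono[OF _ sources_ne top_eigenpair top_eigenpair]) auto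
qed

lemma top_eig_attains:
  assumes \<beta>: "\<beta> > 0" and \<mu>0: "\<mu>0 > 0" and le: "1 / \<beta> \<le> top_eig \<mu>0"
  obtains \<mu> where "\<mu> \<ge> \<mu>0" "top_eig \<mu> = 1 / \<beta>"
proof -
  define B where "B = \<mu>0 + real (card X) * \<beta>"
  have B: "\<mu>0 \<le> B" "B > 0" using \<beta> \<mu>0 by (simp_all add: B_def add_pos_nonneg)
  have "top_eig B \<le> real (card X) / B" by (rule top_eig_le[OF B(2)])
  also have "\<dots> \<le> 1 / \<beta>" using \<beta> B \<mu>0 by (simp add: field_simps B_def)
  finally have "top_eig B \<le> 1 / \<beta>" .
  moreover have "continuous_on {\<mu>0..B} top_eig"
    using continuous_on_subset[OF top_eig_continuous_on[OF \<mu>0]] by auto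
  ultimately show ?thesis using IVT2'[of top_eig B "1 / \<beta>" \<mu>0] le B(1) that by auto
qed

lemma opH_eq: "opH a xs \<beta> u x = opA a u x + \<beta> * (if x \<in> X then u x else 0)"
proof -
  have "(\<Sum>xi\<leftarrow>xs. (if x = xi then u xi else 0)) = (\<Sum>xi\<in>X. (if x = xi then u xi else 0))"
    by (rule sum_list_distinct_conv_sum_set[OF distinct_sources])
  then show ?thesis by (simp add: opH_def sum.delta)
qed

lemma eigenfunction_has_sum:
  assumes "u \<in> eigenspace_H a xs \<beta> \<mu>"
  shows "((\<lambda>y. a (x - y) * u y) has_sum (\<mu> * u x - \<beta> * (if x \<in> X then u x else 0))) UNIV"
proof -
  have u: "u \<in> l2" "opH a xs \<beta> u x = \<mu> * u x"
    using assms by (auto simp: eigenspace_H_def)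
  then have "opA a u x = \<mu> * u x - \<beta> * (if x \<in> X then u x else 0)"
    unfolding opH_eq by linarith
  with opA_has_sum[OF u(1)] show ?thesis by metis
qed

lemma green_superposition_has_sum:
  assumes \<mu>: "\<mu> > 0"
  shows "((\<lambda>x'. a (x - x') * (\<Sum>y\<in>X. s y * green \<mu> (x' - y))) has_sum
     (\<mu> * (\<Sum>y\<in>X. s y * green \<mu> (x - y)) - (if x \<in> X then s x else 0))) UNIV"
proof -
  have "((\<lambda>x'. a (x - x') * green \<mu> (x' - y)) has_sum (\<mu> * green \<mu> (x - y) - (if x = y then 1 else 0))) UNIV" for y
    using green_resolvent_has_sum[OF \<mu>, of "x - y"]
      has_sum_UNIV_shift[of "\<lambda>z. a (x - y - z) * green \<mu> z" y]
    by simp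
  then have "((\<lambda>x'. \<Sum>y\<in>X. s y * (a (x - x') * green \<mu> (x' - y))) has_sum
      (\<Sum>y\<in>X. s y * (\<mu> * green \<mu> (x - y) - (if x = y then 1 else 0)))) UNIV"
    by (intro has_sum_sum finite_set has_sum_cmult_right)
  moreover have "(\<lambda>x'. \<Sum>y\<in>X. s y * (a (x - x') * green \<mu> (x' - y))) =
      (\<lambda>x'. a (x - x') * (\<Sum>y\<in>X. s y * green \<mu> (x' - y)))"
    by (simp add: sum_distrib_left mult_ac)
  moreover have "(\<Sum>y\<in>X. s y * (\<mu> * green \<mu> (x - y) - (if x = y then 1 else 0))) =
      \<mu> * (\<Sum>y\<in>X. s y * green \<mu> (x - y)) - (if x \<in> X then s x else 0)"
    by (simp add: algebra_simps sum_subtractf sum_distrib_left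
        if_distrib[of "\<lambda>t. s _ * t"] cong: if_cong)
  ultimately show ?thesis by simp
qed

lemma green_superposition_l2: "\<mu> > 0 \<Longrightarrow> (\<lambda>x. t * (\<Sum>y\<in>X. s y * green \<mu> (x - y))) \<in> l2"
  by (intro l2_scale l2_sum finite_set l2_shift green_l2)

text \<open>An eigenfunction for \<open>\<mu> > 0\<close> is determined by its values at the sources:
  \<open>u - \<beta> \<Sum>\<^sub>y u(y) G\<^sub>\<mu>(\<cdot> - y)\<close> solves \<open>(\<mu> - \<A>) w = 0\<close> in \<open>l\<^sup>2\<close>, so it vanishes.\<close>
lemma eigenfunction_green_representation:
  assumes \<mu>: "\<mu> > 0" and u: "u \<in> eigenspace_H a xs \<beta> \<mu>"
  shows "u x = \<beta> * (\<Sum>y\<in>X. u y * green \<mu> (x - y))"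
proof -
  define w where "w x = u x - \<beta> * (\<Sum>y\<in>X. u y * green \<mu> (x - y))" for x
  have "w \<in> l2"
    using u unfolding w_def eigenspace_H_def by (intro l2_diff green_superposition_l2 \<mu>) auto
  moreover have "((\<lambda>y. a (x - y) * w y) has_sum (\<mu> * w x + 0)) UNIV" for x
    using has_sum_diff[OF eigenfunction_has_sum[OF u, of x]
        has_sum_cmult_right[OF green_superposition_has_sum[OF \<mu>, of x u], of \<beta>]]
    by (simp add: w_def algebra_simps)
  ultimately have "w x = 0" by (rule resolvent_unique[OF _ \<mu>]) simp
  then show ?thesis by (simp add: w_def)
qed

lemma eigenfunction_restricted:
  assumes "\<mu> > 0" "u \<in> eigenspace_H a xs \<beta> \<mu>" "x \<in> X"
  shows "\<beta> * mat_app X (green_matrix \<mu>) u x = u x"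
  using eigenfunction_green_representation[OF assms(1,2), of x]
  by (simp add: mat_app_def green_matrix_def mult.commute)

lemma positive_eigenvalue_coupling_pos:
  assumes \<mu>: "\<mu> > 0" and u: "u \<in> eigenspace_H a xs \<beta> \<mu>" and nz: "u \<noteq> (\<lambda>_. 0)"
  shows "\<beta> > 0"
proof (rule ccontr)
  assume "\<not> \<beta> > 0"
  then have "- \<beta> * (if x \<in> X then u x else 0) * u x \<ge> 0" for x
    by (simp add: mult_nonpos_nonneg mult.assoc)
  moreover have "((\<lambda>y. a (x - y) * u y) has_sum (\<mu> * u x + - \<beta> * (if x \<in> X then u x else 0))) UNIV" for x
    using eigenfunction_has_sum[OF u, of x] by simp
  moreover have "u \<in> l2" using u by (simp add: eigenspace_H_def)
  ultimately have "u x = 0" for x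
    by (intro resolvent_unique[OF _ \<mu>, of u "\<lambda>x. - \<beta> * (if x \<in> X then u x else 0)"])
  with nz show False by auto
qed

lemma positive_eigenvalue_le_top_eig:
  assumes \<mu>: "\<mu> > 0" and u: "u \<in> eigenspace_H a xs \<beta> \<mu>" and nz: "u \<noteq> (\<lambda>_. 0)"
  shows "1 / \<beta> \<le> top_eig \<mu>"
proof -
  have \<beta>: "\<beta> > 0" by (rule positive_eigenvalue_coupling_pos[OF assms])
  have "\<exists>x\<in>X. u x \<noteq> 0"
  proof (rule ccontr)
    assume "\<not> (\<exists>x\<in>X. u x \<noteq> 0)"
    then have "u x = 0" for x
      using eigenfunction_green_representation[OF \<mu> u, of x] by simp
    with nz show False by auto
  qed
  then have pos: "0 < sqnorm X u" by (simp add: sqnorm_pos_iff)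
  have "\<forall>x\<in>X. mat_app X (green_matrix \<mu>) u x = 1 / \<beta> * u x"
    using eigenfunction_restricted[OF \<mu> u] \<beta> by (simp add: field_simps)
  then have "1 / \<beta> * sqnorm X u = quad_form X (green_matrix \<mu>) u"
    by (rule quad_form_eigenvector[symmetric])
  also have "\<dots> \<le> top_eig \<mu> * sqnorm X u"
    using top_eigenpair[OF \<mu>] by (simp add: perron_eigenpair_def)
  finally show ?thesis using pos by (rule mult_right_le_imp_le)
qed

lemma perron_vector_spreads_to_eigenfunction:
  assumes \<beta>: "\<beta> > 0" and \<mu>: "\<mu> > 0" and pair: "perron_eigenpair X (green_matrix \<mu>) (1 / \<beta>) v"
  defines "u \<equiv> \<lambda>x. \<beta> * (\<Sum>y\<in>X. v y * green \<mu> (x - y))"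
  shows "\<And>x. x \<in> X \<Longrightarrow> u x = v x" and "u \<in> eigenspace_H a xs \<beta> \<mu>"
proof -
  show u_sources: "u x = v x" if "x \<in> X" for x
  proof -
    have "u x = \<beta> * mat_app X (green_matrix \<mu>) v x"
      by (simp add: u_def mat_app_def green_matrix_def mult.commute)
    then show ?thesis using pair that \<beta> by (simp add: perron_eigenpair_def)
  qed
  have "opH a xs \<beta> u x = \<mu> * u x" for x
  proof -
    have "((\<lambda>y. a (x - y) * u y) has_sum (\<mu> * u x - \<beta> * (if x \<in> X then v x else 0))) UNIV"
      using has_sum_cmult_right[OF green_superposition_has_sum[OF \<mu>, of x v], of \<beta>]
      by (simp add: u_def algebra_simps)
    then have "opA a u x = \<mu> * u x - \<beta> * (if x \<in> X then v x else 0)"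
      unfolding opA_def by (rule infsumI)
    then show ?thesis unfolding opH_eq using u_sources by auto
  qed
  moreover have "u \<in> l2" unfolding u_def by (rule green_superposition_l2[OF \<mu>])
  ultimately show "u \<in> eigenspace_H a xs \<beta> \<mu>" by (simp add: eigenspace_H_def fun_eq_iff)
qed

text \<open>Every eigenfunction is a multiple of the spread Perron vector because its restriction to
  the sources lies in the one-dimensional Perron eigenspace.\<close>
lemma simple_eigenvalue_at_root:
  assumes \<beta>: "\<beta> > 0" and \<mu>: "\<mu> > 0" and root: "top_eig \<mu> = 1 / \<beta>"
  shows "is_simple_eigenvalue a xs \<beta> \<mu>"
proof -
  define v where "v = top_vec \<mu>"
  have pair: "perron_eigenpair X (green_matrix \<mu>) (1 / \<beta>) v"
    using top_eigenpair[OF \<mu>] root by (simp add: v_def)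
  define u where "u x = \<beta> * (\<Sum>y\<in>X. v y * green \<mu> (x - y))" for x
  note spread = perron_vector_spreads_to_eigenfunction[OF \<beta> \<mu> pair, folded u_def]
  obtain x1 where "x1 \<in> X" using sources_ne by (meson ex_in_conv)
  then have "u x1 > 0" using pair spread(1) by (simp add: perron_eigenpair_def)
  then have u_nz: "u \<noteq> (\<lambda>_. 0)" by (metis less_irrefl)
  have "\<exists>k. w = (\<lambda>x. k * u x)" if w: "w \<in> eigenspace_H a xs \<beta> \<mu>" for w
  proof -
    have "\<forall>x\<in>X. mat_app X (green_matrix \<mu>) w x = 1 / \<beta> * w x"
      using eigenfunction_restricted[OF \<mu> w] \<beta> by (simp add: field_simps)
    then obtain k where k: "\<forall>x\<in>X. w x = k * v x"
      using pair unfolding perron_eigenpair_def by blast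
    have "w x = k * u x" for x
    proof -
      have "w x = \<beta> * (\<Sum>y\<in>X. k * (v y * green \<mu> (x - y)))"
        using eigenfunction_green_representation[OF \<mu> w, of x] k by (simp add: mult.assoc)
      also have "\<dots> = k * (\<beta> * (\<Sum>y\<in>X. v y * green \<mu> (x - y)))"
        by (simp only: sum_distrib_left[symmetric] mult.left_commute)
      also have "\<dots> = k * u x" by (simp add: u_def)
      finally show ?thesis .
    qed
    then show ?thesis by (intro exI[of _ k] ext)
  qed
  with spread(2) u_nz show ?thesis unfolding is_simple_eigenvalue_def by (intro bexI[of _ u]) auto
qed

lemma has_pos_eigenvalue_iff:
  "has_pos_eigenvalue a xs \<beta> \<longleftrightarrow> \<beta> > 0 \<and> (\<exists>\<mu>>0. 1 / \<beta> \<le> top_eig \<mu>)"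
proof
  assume "has_pos_eigenvalue a xs \<beta>"
  then obtain \<mu> u where "\<mu> > 0" "u \<in> eigenspace_H a xs \<beta> \<mu>" "u \<noteq> (\<lambda>_. 0)"
    unfolding has_pos_eigenvalue_def is_eigenvalue_def by blast
  then show "\<beta> > 0 \<and> (\<exists>\<mu>>0. 1 / \<beta> \<le> top_eig \<mu>)"
    using positive_eigenvalue_coupling_pos positive_eigenvalue_le_top_eig by blast
next
  assume "\<beta> > 0 \<and> (\<exists>\<mu>>0. 1 / \<beta> \<le> top_eig \<mu>)"
  then obtain \<mu>0 where \<beta>: "\<beta> > 0" and "\<mu>0 > 0" "1 / \<beta> \<le> top_eig \<mu>0" by blast
  then obtain \<mu> where \<mu>: "\<mu> > 0" "top_eig \<mu> = 1 / \<beta>"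
    using top_eig_attains by (metis order_less_le_trans)
  then have "is_simple_eigenvalue a xs \<beta> \<mu>" by (intro simple_eigenvalue_at_root \<beta>)
  then show "has_pos_eigenvalue a xs \<beta>"
    using \<mu> unfolding is_simple_eigenvalue_def is_eigenvalue_def has_pos_eigenvalue_def by blast
qed

text \<open>The supercritical couplings form the open ray above \<open>1 / sup top_eig\<close>: it is closed
  upwards, and has no least element because \<open>top_eig\<close> is strictly decreasing.\<close>
lemma has_pos_eigenvalue_iff_beta_c: "has_pos_eigenvalue a xs \<beta> \<longleftrightarrow> beta_c a xs < \<beta>"
proof -
  define S where "S = {\<beta>. has_pos_eigenvalue a xs \<beta>}"
  have S_iff: "\<beta> \<in> S \<longleftrightarrow> \<beta> > 0 \<and> (\<exists>\<mu>>0. 1 / \<beta> \<le> top_eig \<mu>)" for \<beta>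
    by (simp add: S_def has_pos_eigenvalue_iff)
  have top_in_S: "1 / top_eig \<mu> \<in> S" if "\<mu> > 0" for \<mu>
    unfolding S_iff using that top_eig_pos[OF that] by auto
  have "S = {Inf S<..}"
  proof (rule upclosed_without_min_eq_greaterThan_Inf)
    show "S \<noteq> {}" using top_in_S[of 1] by auto
    have "\<forall>\<beta>\<in>S. 0 \<le> \<beta>" using S_iff less_imp_le by blast
    then show "bdd_below S" by (auto intro: bdd_belowI)
    show "\<beta>' \<in> S" if "\<beta> \<in> S" "\<beta> \<le> \<beta>'" for \<beta> \<beta>'
    proof -
      obtain \<mu> where \<mu>: "\<beta> > 0" "\<mu> > 0" "1 / \<beta> \<le> top_eig \<mu>" using \<open>\<beta> \<in> S\<close> S_iff by blast
      moreover have "1 / \<beta>' \<le> 1 / \<beta>" using \<mu>(1) \<open>\<beta> \<le> \<beta>'\<close> by (simp add: frac_le)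
      ultimately have "\<beta>' > 0 \<and> (\<exists>\<mu>>0. 1 / \<beta>' \<le> top_eig \<mu>)"
        using \<open>\<beta> \<le> \<beta>'\<close> by (meson order_less_le_trans order_trans)
      then show ?thesis using S_iff by blast
    qed
    show "\<exists>\<beta>'\<in>S. \<beta>' < \<beta>" if "\<beta> \<in> S" for \<beta>
    proof -
      obtain \<mu> where \<mu>: "\<beta> > 0" "\<mu> > 0" "1 / \<beta> \<le> top_eig \<mu>" using \<open>\<beta> \<in> S\<close> S_iff by blast
      have "top_eig \<mu> < top_eig (\<mu> / 2)" using \<mu>(2) by (intro top_eig_strict_antimono) auto
      then have "1 / \<beta> < top_eig (\<mu> / 2)" using \<mu>(3) by linarith
      then have "1 / top_eig (\<mu> / 2) < \<beta>"
        using \<mu>(1) top_eig_pos[of "\<mu> / 2"] \<mu>(2) by (simp add: field_simps)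
      then show ?thesis using top_in_S[of "\<mu> / 2"] \<mu>(2) by auto
    qed
  qed
  then have iff: "has_pos_eigenvalue a xs \<beta> \<longleftrightarrow> Inf S < \<beta>" for \<beta>
    by (metis S_def greaterThan_iff mem_Collect_eq)
  then have "beta_c a xs = Inf S"
    unfolding beta_c_def by (rule Inf_right_germs_greaterThan)
  with iff show ?thesis by simp
qed

lemma eigenvalue_branch_exists:
  "\<exists>lam. \<forall>\<beta>>beta_c a xs. lam \<beta> > 0 \<and> top_eig (lam \<beta>) = 1 / \<beta>"
proof -
  have "\<exists>\<mu>>0. top_eig \<mu> = 1 / \<beta>" if "beta_c a xs < \<beta>" for \<beta>
  proof -
    have "has_pos_eigenvalue a xs \<beta>" using that by (simp add: has_pos_eigenvalue_iff_beta_c)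
    then obtain \<mu>0 where \<mu>0: "\<beta> > 0" "\<mu>0 > 0" "1 / \<beta> \<le> top_eig \<mu>0"
      unfolding has_pos_eigenvalue_iff by blast
    then obtain \<mu> where "\<mu> \<ge> \<mu>0" "top_eig \<mu> = 1 / \<beta>" by (rule top_eig_attains)
    then show ?thesis using \<mu>0(2) by (intro exI[of _ \<mu>]) auto
  qed
  then show ?thesis
    by (intro exI[of _ "\<lambda>\<beta>. SOME \<mu>. \<mu> > 0 \<and> top_eig \<mu> = 1 / \<beta>"] allI impI) (rule someI_ex)
qed

lemma eigenvalue_branch_tendsto_zero:
  assumes lam: "\<And>\<beta>. beta_c a xs < \<beta> \<Longrightarrow> lam \<beta> > 0 \<and> top_eig (lam \<beta>) = 1 / \<beta>"
  shows "(lam \<longlongrightarrow> 0) (at_right (beta_c a xs))"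
proof (rule tendstoI)
  fix e :: real assume e: "e > 0"
  have "has_pos_eigenvalue a xs (1 / top_eig (e / 2))"
    unfolding has_pos_eigenvalue_iff using e top_eig_pos[of "e / 2"] by (auto intro!: exI[of _ "e / 2"])
  then have "beta_c a xs < 1 / top_eig (e / 2)" by (simp add: has_pos_eigenvalue_iff_beta_c)
  also have "\<dots> < 1 / top_eig e"
    using top_eig_strict_antimono[of "e / 2" e] top_eig_pos e by (simp add: frac_less2)
  finally have threshold: "beta_c a xs < 1 / top_eig e" .
  have small: "lam \<beta> < e" if "beta_c a xs < \<beta>" "\<beta> < 1 / top_eig e" for \<beta>
  proof (rule ccontr)
    assume "\<not> lam \<beta> < e"
    then have "e = lam \<beta> \<or> e < lam \<beta>" by auto
    then have "top_eig (lam \<beta>) \<le> top_eig e"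
      using top_eig_strict_antimono[OF e, of "lam \<beta>"] by auto
    moreover have "has_pos_eigenvalue a xs \<beta>" using that(1) by (simp add: has_pos_eigenvalue_iff_beta_c)
    then have "\<beta> > 0" by (simp add: has_pos_eigenvalue_iff)
    then have "top_eig e < 1 / \<beta>"
      using that(2) top_eig_pos[OF e] by (simp add: field_simps)
    ultimately show False using lam[OF that(1)] by simp
  qed
  show "\<forall>\<^sub>F \<beta> in at_right (beta_c a xs). dist (lam \<beta>) 0 < e"
    unfolding eventually_at_right_field
  proof (intro exI[of _ "1 / top_eig e"] conjI allI impI)
    fix \<beta> assume "beta_c a xs < \<beta>" "\<beta> < 1 / top_eig e"
    then have "lam \<beta> < e" "0 < lam \<beta>" using small lam by auto
    then show "dist (lam \<beta>) 0 < e" by (simp add: dist_real_def)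
  qed (rule threshold)
qed

end

theorem theorem3:
  fixes a :: "int ^ 'd \<Rightarrow> real" and xs :: "(int ^ 'd) list"
  assumes "walk_kernel a"
    and "condF a \<or> condHT a"
    and "xs \<noteq> []" and "distinct xs"
  shows "\<exists>\<epsilon>0>0. \<exists>lam::real \<Rightarrow> real.
           (\<forall>\<beta>. beta_c a xs < \<beta> \<and> \<beta> < beta_c a xs + \<epsilon>0 \<longrightarrow>
                lam \<beta> > 0 \<and> is_simple_eigenvalue a xs \<beta> (lam \<beta>)) \<and>
           (lam \<longlongrightarrow> 0) (at_right (beta_c a xs))"
proof -
  interpret point_sources a xs
    using assms by unfold_locales (auto simp: random_walk_def)
  obtain lam where lam: "\<And>\<beta>. beta_c a xs < \<beta> \<Longrightarrow> lam \<beta> > 0 \<and> top_eig (lam \<beta>) = 1 / \<beta>"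
    using eigenvalue_branch_exists by blast
  have "is_simple_eigenvalue a xs \<beta> (lam \<beta>)" if "beta_c a xs < \<beta>" for \<beta>
    using lam[OF that] has_pos_eigenvalue_iff_beta_c has_pos_eigenvalue_iff that
    by (intro simple_eigenvalue_at_root) auto
  then show ?thesis
    using lam eigenvalue_branch_tendsto_zero[OF lam] by (intro exI[of _ 1]) auto
qed

end
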